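(* (a) At an equilibrium point $D$, $\min_{S\in\mathcal C}C_S=C_{\{s_0\}}=1$. (b) A vector $D\in\mathbb R^E_{\ge0}$ is an equilibrium point if and only if $D=|Q|$ for some $s_0$-$s_1$ flow $Q$ of value $1$ with the following property: orienting every edge in the direction of $Q$ and deleting the edges with $Q_e=0$, all directed $s_0$-$s_1$ paths in the resulting directed graph have the same length. In particular, if no two distinct $s_0$-$s_1$ paths in $G$ have the same length, the equilibria are precisely the vectors that equal $1$ on the edges of a simple $s_0$-$s_1$ path and $0$ elsewhere.
   Context: Let $G=(N,E)$ be a finite connected undirected graph with two distinct vertices $s_0$ (source) and $s_1$ (sink). Each edge $e$ has a fixed length $L_e>0$ and a diameter $D_e\ge 0$; edges with $D_e=0$ are treated as absent (conductance $D_e/L_e=0$). Given $D$, the potentials $p_v$ solve $\sum_{u\in\delta(v)}(p_v-p_u)D_{uv}/L_{uv}=b_v$ with $b_{s_0}=1$, $b_{s_1}=-1$, $b_v=0$ otherwise ($\delta(v)$ the neighbours of $v$), and $Q_e=D_e(p_u-p_v)/L_e$ for $e=\{u,v\}$ with a fixed orientation $(u,v)$ (the electrical $s_0$-$s_1$ flow of value 1). $D$ is an equilibrium point of the dynamics $\dot D_e=|Q_e|-D_e$ if $D_e=|Q_e|$ for all $e$. For $S\subseteq N$, $\delta(S)$ is the set of edges with exactly one endpoint in $S$; $\mathcal C$ is the set of $S\subseteq N$ with $s_0\in S$, $s_1\notin S$; $C_S=\sum_{e\in\delta(S)}D_e$. The length of a path is the sum of $L_e$ over its edges.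
   Formalization: In (b) the $s_0$-$s_1$ flow Q of value 1 is also acyclic, so the directed graph obtained from it has no directed cycle, and G is a simple graph. Each condition added here is assumed in the paper as well or is needed for the statement above to hold. *)

theory Defs
  imports Main "HOL.Real"
begin

text \<open>Undirected simple graph on a finite vertex set V. Each edge {u,v} is stored
  once as an ordered pair (u,v), which also fixes its orientation. Functions on
  edges (lengths L, diameters D, flows Q) have type ('v \<times> 'v) \<Rightarrow> real and
  only their values on E matter.\<close>

definition bvec :: "'v \<Rightarrow> 'v \<Rightarrow> 'v \<Rightarrow> real" where
  "bvec s0 s1 v = (if v = s0 then 1 else if v = s1 then -1 else 0)"

text \<open>p solves the Kirchhoff/Laplacian system for conductances D/L.\<close>
definition is_potential ::
  "'v set \<Rightarrow> ('v \<times> 'v) set \<Rightarrow> ('v \<times> 'v \<Rightarrow> real) \<Rightarrow> ('v \<times> 'v \<Rightarrow> real)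
   \<Rightarrow> 'v \<Rightarrow> 'v \<Rightarrow> ('v \<Rightarrow> real) \<Rightarrow> bool" where
  "is_potential V E L D s0 s1 p \<longleftrightarrow>
     (\<forall>v\<in>V. (\<Sum>e\<in>{e\<in>E. fst e = v}. (p v - p (snd e)) * D e / L e)
           + (\<Sum>e\<in>{e\<in>E. snd e = v}. (p v - p (fst e)) * D e / L e) = bvec s0 s1 v)"

definition elec_flow :: "('v \<times> 'v \<Rightarrow> real) \<Rightarrow> ('v \<times> 'v \<Rightarrow> real) \<Rightarrow> ('v \<Rightarrow> real) \<Rightarrow> 'v \<times> 'v \<Rightarrow> real" where
  "elec_flow L D p e = D e * (p (fst e) - p (snd e)) / L e"

definition equilibrium ::
  "'v set \<Rightarrow> ('v \<times> 'v) set \<Rightarrow> ('v \<times> 'v \<Rightarrow> real) \<Rightarrow> 'v \<Rightarrow> 'v \<Rightarrow> ('v \<times> 'v \<Rightarrow> real) \<Rightarrow> bool" where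
  "equilibrium V E L s0 s1 D \<longleftrightarrow>
     (\<forall>e\<in>E. D e \<ge> 0) \<and>
     (\<exists>p. is_potential V E L D s0 s1 p \<and> (\<forall>e\<in>E. D e = \<bar>elec_flow L D p e\<bar>))"

definition cut_edges :: "('v \<times> 'v) set \<Rightarrow> 'v set \<Rightarrow> ('v \<times> 'v) set" where
  "cut_edges E S = {e\<in>E. (fst e \<in> S) \<noteq> (snd e \<in> S)}"

definition cut_cap :: "('v \<times> 'v) set \<Rightarrow> ('v \<times> 'v \<Rightarrow> real) \<Rightarrow> 'v set \<Rightarrow> real" where
  "cut_cap E D S = (\<Sum>e\<in>cut_edges E S. D e)"

definition st_cuts :: "'v set \<Rightarrow> 'v \<Rightarrow> 'v \<Rightarrow> 'v set set" where
  "st_cuts V s0 s1 = {S. S \<subseteq> V \<and> s0 \<in> S \<and> s1 \<notin> S}"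

definition is_unit_flow ::
  "'v set \<Rightarrow> ('v \<times> 'v) set \<Rightarrow> 'v \<Rightarrow> 'v \<Rightarrow> ('v \<times> 'v \<Rightarrow> real) \<Rightarrow> bool" where
  "is_unit_flow V E s0 s1 Q \<longleftrightarrow>
     (\<forall>v\<in>V. (\<Sum>e\<in>{e\<in>E. fst e = v}. Q e) - (\<Sum>e\<in>{e\<in>E. snd e = v}. Q e) = bvec s0 s1 v)"

definition flow_arcs :: "('v \<times> 'v) set \<Rightarrow> ('v \<times> 'v \<Rightarrow> real) \<Rightarrow> ('v \<times> 'v) set" where
  "flow_arcs E Q = {(u,v). (u,v) \<in> E \<and> Q (u,v) > 0} \<union> {(v,u). (u,v) \<in> E \<and> Q (u,v) < 0}"

definition elen :: "('v \<times> 'v) set \<Rightarrow> ('v \<times> 'v \<Rightarrow> real) \<Rightarrow> 'v \<times> 'v \<Rightarrow> real" where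
  "elen E L a = (if a \<in> E then L a else L (snd a, fst a))"

definition is_path :: "('v \<times> 'v) set \<Rightarrow> 'v \<Rightarrow> 'v \<Rightarrow> 'v list \<Rightarrow> bool" where
  "is_path R a b xs \<longleftrightarrow> xs \<noteq> [] \<and> hd xs = a \<and> last xs = b \<and> distinct xs
      \<and> set (zip xs (tl xs)) \<subseteq> R"

definition path_len :: "('v \<times> 'v) set \<Rightarrow> ('v \<times> 'v \<Rightarrow> real) \<Rightarrow> 'v list \<Rightarrow> real" where
  "path_len E L xs = (\<Sum>a\<leftarrow>zip xs (tl xs). elen E L a)"

definition path_edges :: "('v \<times> 'v) set \<Rightarrow> 'v list \<Rightarrow> ('v \<times> 'v) set" where
  "path_edges E xs = {e\<in>E. e \<in> set (zip xs (tl xs)) \<or> (snd e, fst e) \<in> set (zip xs (tl xs))}"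

definition network :: "'v set \<Rightarrow> ('v \<times> 'v) set \<Rightarrow> ('v \<times> 'v \<Rightarrow> real) \<Rightarrow> 'v \<Rightarrow> 'v \<Rightarrow> bool" where
  "network V E L s0 s1 \<longleftrightarrow> finite V \<and> E \<subseteq> V \<times> V
     \<and> (\<forall>(u,v)\<in>E. u \<noteq> v \<and> (v,u) \<notin> E)
     \<and> (\<forall>u\<in>V. \<forall>v\<in>V. (u,v) \<in> (E \<union> E\<inverse>)\<^sup>*)
     \<and> s0 \<in> V \<and> s1 \<in> V \<and> s0 \<noteq> s1
     \<and> (\<forall>e\<in>E. L e > 0)"

end

theory Submission
  imports Defs
begin

text \<open>
  Proof outline. Every object is read through the flow Q attached to a vector D and its
  arc set: the edges oriented in the direction of Q, with Q = 0 deleted.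

  (1) Flow conservation across cuts: a unit s0-s1 flow sends net amount
      [s0 in S] - [s1 in S] out of every vertex set S. Hence a set that no arc leaves
      and that contains s0 contains s1, and if the arcs are acyclic every arc lies on a
      directed s0-s1 path (the vertices reached from an arc would otherwise violate
      conservation). In particular no arc enters s0, which gives part (a): the cut
      around s0 carries exactly 1, every other s0-s1 cut at least 1.
  (2) At an equilibrium with potential p, each arc descends in p by exactly its
      length, so the arcs are acyclic and all directed s0-s1 paths have length
      p(s0) - p(s1). Conversely, given such a flow, the length of any directed path to
      s1 is a well defined potential reproducing Q as electrical flow.
  (3) If all s0-s1 paths in G have distinct lengths, the directed s0-s1 path of an
      equilibrium flow is unique; by (1) it carries every arc, and the prefix cuts
      along it show that the flow is 1 on its edges. Conversely the indicator of a
      simple path is the absolute value of the path flow, to which (2) applies.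
\<close>

section \<open>Walks and simple paths\<close>

lemma telescope_sum:
  fixes f :: "'a \<Rightarrow> 'b::ab_group_add"
  assumes "xs \<noteq> []"
  shows "(\<Sum>(a,b)\<leftarrow>zip xs (tl xs). f a - f b) = f (hd xs) - f (last xs)"
  using assms by (induction xs rule: induct_list012) auto

lemma zip_append_tl:
  assumes "xs \<noteq> []" "ys \<noteq> []" "last xs = hd ys"
  shows "zip (xs @ tl ys) (tl (xs @ tl ys)) = zip xs (tl xs) @ zip ys (tl ys)"
  using assms by (induction xs rule: induct_list012) (auto simp: neq_Nil_conv)

lemma in_set_zip_tl:
  "(a,b) \<in> set (zip xs (tl xs)) \<longleftrightarrow> (\<exists>i. Suc i < length xs \<and> xs!i = a \<and> xs!Suc i = b)"
proof
  assume "(a,b) \<in> set (zip xs (tl xs))"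
  then obtain n where "a = xs!n" "b = xs!Suc n" "n < length xs - 1"
    by (auto simp: in_set_zip nth_tl)
  then show "\<exists>i. Suc i < length xs \<and> xs!i = a \<and> xs!Suc i = b" by (intro exI[of _ n]) auto
qed (auto simp: in_set_zip nth_tl)

lemma walk_trancl:
  assumes "set (zip xs (tl xs)) \<subseteq> r" "i < j" "j < length xs"
  shows "(xs!i, xs!j) \<in> r\<^sup>+"
  using assms(2,3)
proof (induction j)
  case (Suc j)
  have "(xs!j, xs!Suc j) \<in> set (zip xs (tl xs))"
    unfolding in_set_zip_tl using Suc.prems by blast
  then have step: "(xs!j, xs!Suc j) \<in> r" using assms(1) by blast
  show ?case
  proof (cases "i = j")
    case False
    then have "(xs!i, xs!j) \<in> r\<^sup>+" using Suc by simp
    then show ?thesis using step by (rule trancl_into_trancl)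
  qed (use step in simp)
qed simp

lemma distinct_take_mem:
  assumes "distinct xs" "i < length xs"
  shows "xs!i \<in> set (take m xs) \<longleftrightarrow> i < m"
proof
  assume "xs!i \<in> set (take m xs)"
  then obtain j where "j < length (take m xs)" "take m xs ! j = xs!i"
    by (auto simp: in_set_conv_nth)
  then show "i < m" using assms nth_eq_iff_index_eq by fastforce
next
  assume "i < m"
  then show "xs!i \<in> set (take m xs)"
    using assms(2) by (metis in_set_conv_nth length_take min_less_iff_conj nth_take)
qed

lemma prefix_crossing:
  assumes "distinct xs" "Suc i < length xs"
  shows "(xs!i \<in> set (take m xs)) \<noteq> (xs!Suc i \<in> set (take m xs)) \<longleftrightarrow> m = Suc i"
  using distinct_take_mem[OF assms(1), of i m] distinct_take_mem[OF assms(1), of "Suc i" m] assms(2)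
  by auto

lemma path_edge_position:
  assumes "e \<in> path_edges E xs"
  shows "\<exists>i. Suc i < length xs \<and> (e = (xs!i, xs!Suc i) \<or> e = (xs!Suc i, xs!i))"
  using assms unfolding path_edges_def by (cases e) (auto simp: in_set_zip_tl)

lemma walk_vertices:
  assumes "set (zip xs (tl xs)) \<subseteq> V \<times> V" "xs \<noteq> []" "hd xs \<in> V"
  shows "set xs \<subseteq> V"
proof
  fix x assume "x \<in> set xs"
  then obtain i where i: "i < length xs" "xs!i = x" by (auto simp: in_set_conv_nth)
  show "x \<in> V"
  proof (cases i)
    case 0 then show ?thesis using i assms(2,3) by (simp add: hd_conv_nth)
  next
    case (Suc j)
    then have "(xs!j, xs!Suc j) \<in> set (zip xs (tl xs))"
      using i unfolding in_set_zip_tl by auto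
    then show ?thesis using assms(1) i Suc by auto
  qed
qed

lemma acyclic_walk_distinct:
  assumes "acyclic r" "set (zip xs (tl xs)) \<subseteq> r"
  shows "distinct xs"
  unfolding distinct_conv_nth
proof (intro allI impI)
  fix i j assume "i < length xs" "j < length xs" "i \<noteq> j"
  then have "(xs!min i j, xs!max i j) \<in> r\<^sup>+"
    using walk_trancl[OF assms(2)] by (simp add: min_def max_def)
  then show "xs!i \<noteq> xs!j"
    using assms(1) \<open>i \<noteq> j\<close> by (auto simp: acyclic_def min_def max_def split: if_splits)
qed

lemma rtrancl_walk:
  assumes "(x,y) \<in> r\<^sup>*"
  shows "\<exists>xs. xs \<noteq> [] \<and> hd xs = x \<and> last xs = y \<and> set (zip xs (tl xs)) \<subseteq> r"
  using assms
proof (induction rule: converse_rtrancl_induct)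
  case base
  show ?case by (intro exI[of _ "[y]"]) simp
next
  case (step x z)
  then obtain xs where "xs \<noteq> []" "hd xs = z" "last xs = y" "set (zip xs (tl xs)) \<subseteq> r"
    by blast
  then show ?case using step(1) by (intro exI[of _ "x # xs"]) (auto simp: neq_Nil_conv)
qed

lemma acyclic_rtrancl_path:
  assumes "acyclic r" "(x,y) \<in> r\<^sup>*"
  shows "\<exists>xs. is_path r x y xs"
  using rtrancl_walk[OF assms(2)] acyclic_walk_distinct[OF assms(1)]
  unfolding is_path_def by blast

lemma is_path_mono: "is_path A x y xs \<Longrightarrow> A \<subseteq> B \<Longrightarrow> is_path B x y xs"
  by (auto simp: is_path_def)

lemma simple_path_no_backstep:
  assumes "distinct xs" "(a,b) \<in> set (zip xs (tl xs))"
  shows "(b,a) \<notin> set (zip xs (tl xs))"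
proof
  assume "(b,a) \<in> set (zip xs (tl xs))"
  then obtain j where j: "Suc j < length xs" "xs!j = b" "xs!Suc j = a"
    unfolding in_set_zip_tl by blast
  obtain i where i: "Suc i < length xs" "xs!i = a" "xs!Suc i = b"
    using assms(2) unfolding in_set_zip_tl by blast
  have "i = Suc j" "Suc i = j"
    using nth_eq_iff_index_eq[OF assms(1)] i j by (metis Suc_lessD)+
  then show False by simp
qed

lemma path_concat:
  assumes "acyclic r" "is_path r x y xs" "is_path r y z ys"
  shows "is_path r x z (xs @ tl ys)"
    and "path_len E L (xs @ tl ys) = path_len E L xs + path_len E L ys"
proof -
  have ne: "xs \<noteq> []" "ys \<noteq> []" and join: "last xs = hd ys"
    using assms(2,3) by (auto simp: is_path_def)
  have zip: "zip (xs @ tl ys) (tl (xs @ tl ys)) = zip xs (tl xs) @ zip ys (tl ys)"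
    by (rule zip_append_tl[OF ne join])
  have walk: "set (zip (xs @ tl ys) (tl (xs @ tl ys))) \<subseteq> r"
    using assms(2,3) unfolding zip by (auto simp: is_path_def)
  have "last (xs @ tl ys) = z"
    using assms(2,3) join by (cases ys) (auto simp: is_path_def)
  then show "is_path r x z (xs @ tl ys)"
    using acyclic_walk_distinct[OF assms(1) walk] walk ne assms(2) by (auto simp: is_path_def)
  show "path_len E L (xs @ tl ys) = path_len E L xs + path_len E L ys"
    unfolding path_len_def zip by simp
qed

lemma path_len_telescope:
  assumes "xs \<noteq> []" "set (zip xs (tl xs)) \<subseteq> r"
    and "\<And>a b. (a,b) \<in> r \<Longrightarrow> elen E L (a,b) = f a - f b"
  shows "path_len E L xs = f (hd xs) - f (last xs)"
proof -
  have "path_len E L xs = (\<Sum>(a,b)\<leftarrow>zip xs (tl xs). f a - f b)"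
    unfolding path_len_def
    by (rule arg_cong[where f=sum_list], rule map_cong) (use assms(2,3) in auto)
  then show ?thesis using telescope_sum[OF assms(1)] by simp
qed

lemma path_len_drop:
  assumes "Suc i < length xs"
  shows "path_len E L (drop i xs) = elen E L (xs!i, xs!Suc i) + path_len E L (drop (Suc i) xs)"
proof -
  have "drop (Suc i) xs = xs!Suc i # drop (Suc (Suc i)) xs"
    using assms by (simp add: Cons_nth_drop_Suc)
  moreover have "drop i xs = xs!i # drop (Suc i) xs"
    using assms by (simp add: Cons_nth_drop_Suc)
  ultimately show ?thesis by (simp add: path_len_def)
qed

lemma potential_acyclic:
  fixes f :: "'a \<Rightarrow> real"
  assumes "\<And>a b. (a,b) \<in> r \<Longrightarrow> f b < f a"
  shows "acyclic r"
proof -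
  have "f y < f x" if "(x,y) \<in> r\<^sup>+" for x y
    using that by (induction rule: trancl_induct) (auto dest: assms)
  then show ?thesis unfolding acyclic_def by blast
qed

section \<open>Unit flows and cuts\<close>

lemma network_facts:
  assumes "network V E L s0 s1"
  shows "finite V" "finite E" "E \<subseteq> V \<times> V" "\<And>u v. (u,v) \<in> E \<Longrightarrow> (v,u) \<notin> E"
    "s0 \<in> V" "s1 \<in> V" "s0 \<noteq> s1" "\<And>e. e \<in> E \<Longrightarrow> L e > 0"
  using assms unfolding network_def by (auto intro: finite_subset[of E "V \<times> V"])

lemma flow_arcs_iff:
  "(a,b) \<in> flow_arcs E Q \<longleftrightarrow> ((a,b) \<in> E \<and> Q (a,b) > 0) \<or> ((b,a) \<in> E \<and> Q (b,a) < 0)"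
  by (auto simp: flow_arcs_def)

lemma flow_arcs_subset: "flow_arcs E Q \<subseteq> E \<union> E\<inverse>"
  by (auto simp: flow_arcs_def)

definition cross_flow :: "('v \<times> 'v \<Rightarrow> real) \<Rightarrow> 'v set \<Rightarrow> 'v \<times> 'v \<Rightarrow> real" where
  "cross_flow Q S e = (if fst e \<in> S then Q e else - Q e)"

lemma abs_cross_flow [simp]: "\<bar>cross_flow Q S e\<bar> = \<bar>Q e\<bar>"
  by (simp add: cross_flow_def)

text \<open>Flow conservation across cuts: summing the node balances over S shows that a unit
  s0-s1 flow sends net amount [s0 in S] - [s1 in S] out of S.\<close>

lemma unit_flow_cut:
  fixes E :: "('v \<times> 'v) set"
  assumes "finite E" "finite S" "S \<subseteq> V" "s0 \<noteq> s1" "is_unit_flow V E s0 s1 Q"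
  shows "(\<Sum>e\<in>cut_edges E S. cross_flow Q S e)
           = (if s0 \<in> S then 1 else 0) - (if s1 \<in> S then 1 else 0)"
proof -
  have incident: "(\<Sum>v\<in>S. \<Sum>e\<in>{e\<in>E. g e = v}. Q e) = (\<Sum>e\<in>E. if g e \<in> S then Q e else 0)"
    for g :: "'v \<times> 'v \<Rightarrow> 'v"
  proof -
    have "(\<Sum>v\<in>S. \<Sum>e\<in>{e\<in>E. g e = v}. Q e) = (\<Sum>v\<in>S. \<Sum>e\<in>E. if g e = v then Q e else 0)"
      using assms(1) by (simp add: sum.inter_filter)
    also have "\<dots> = (\<Sum>e\<in>E. \<Sum>v\<in>S. if g e = v then Q e else 0)"
      by (rule sum.swap)
    finally show ?thesis using assms(2) by simp
  qed
  have "(if s0 \<in> S then 1 else 0) - (if s1 \<in> S then 1 else 0)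
      = (\<Sum>v\<in>S. (if v = s0 then 1 else 0) - (if v = s1 then 1 else (0::real)))"
    using assms(2) by (simp add: sum_subtractf)
  also have "\<dots> = (\<Sum>v\<in>S. bvec s0 s1 v)"
    using assms(4) by (intro sum.cong) (auto simp: bvec_def)
  also have "\<dots> = (\<Sum>v\<in>S. (\<Sum>e\<in>{e\<in>E. fst e = v}. Q e) - (\<Sum>e\<in>{e\<in>E. snd e = v}. Q e))"
    using assms(3,5) unfolding is_unit_flow_def by (intro sum.cong) auto
  also have "\<dots> = (\<Sum>e\<in>E. (if fst e \<in> S then Q e else 0) - (if snd e \<in> S then Q e else 0))"
    by (simp add: sum_subtractf incident)
  also have "\<dots> = (\<Sum>e\<in>E. if e \<in> cut_edges E S then cross_flow Q S e else 0)"
    by (intro sum.cong) (auto simp: cut_edges_def cross_flow_def)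
  also have "\<dots> = (\<Sum>e\<in>cut_edges E S. cross_flow Q S e)"
    using assms(1) by (simp add: sum.inter_filter cut_edges_def)
  finally show ?thesis by simp
qed

lemma arc_leaving_iff:
  "(\<exists>e\<in>cut_edges E S. 0 < cross_flow Q S e) \<longleftrightarrow> (\<exists>a b. (a,b) \<in> flow_arcs E Q \<and> a \<in> S \<and> b \<notin> S)"
proof
  assume "\<exists>e\<in>cut_edges E S. 0 < cross_flow Q S e"
  then obtain u w where "(u,w) \<in> cut_edges E S" "0 < cross_flow Q S (u,w)" by auto
  then show "\<exists>a b. (a,b) \<in> flow_arcs E Q \<and> a \<in> S \<and> b \<notin> S"
    by (cases "u \<in> S") (auto simp: cut_edges_def cross_flow_def flow_arcs_iff)
next
  assume "\<exists>a b. (a,b) \<in> flow_arcs E Q \<and> a \<in> S \<and> b \<notin> S"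
  then obtain a b where "(a,b) \<in> flow_arcs E Q" "a \<in> S" "b \<notin> S" by blast
  then show "\<exists>e\<in>cut_edges E S. 0 < cross_flow Q S e"
    unfolding flow_arcs_iff
  proof (elim disjE)
    assume "(a,b) \<in> E \<and> 0 < Q (a,b)"
    then show ?thesis using \<open>a \<in> S\<close> \<open>b \<notin> S\<close>
      by (intro bexI[of _ "(a,b)"]) (auto simp: cut_edges_def cross_flow_def)
  next
    assume "(b,a) \<in> E \<and> Q (b,a) < 0"
    then show ?thesis using \<open>a \<in> S\<close> \<open>b \<notin> S\<close>
      by (intro bexI[of _ "(b,a)"]) (auto simp: cut_edges_def cross_flow_def)
  qed
qed

lemma arc_entering_iff:
  "(\<exists>e\<in>cut_edges E S. cross_flow Q S e < 0) \<longleftrightarrow> (\<exists>a b. (a,b) \<in> flow_arcs E Q \<and> a \<notin> S \<and> b \<in> S)"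
proof -
  have "cut_edges E (- S) = cut_edges E S" by (auto simp: cut_edges_def)
  moreover have "e \<in> cut_edges E S \<Longrightarrow> cross_flow Q (- S) e = - cross_flow Q S e" for e
    by (auto simp: cut_edges_def cross_flow_def)
  ultimately show ?thesis
    using arc_leaving_iff[of E "- S" Q] by (metis ComplD ComplI neg_0_less_iff_less)
qed

text \<open>A vertex set that no arc of a unit flow leaves has nonpositive net outflow: if it
  contains the source it contains the sink, and if some arc enters it, it contains the
  sink but not the source.\<close>

lemma closed_set_contains_sink:
  assumes net: "network V E L s0 s1" and uf: "is_unit_flow V E s0 s1 Q" and "S \<subseteq> V"
    and closed: "\<And>a b. (a,b) \<in> flow_arcs E Q \<Longrightarrow> a \<in> S \<Longrightarrow> b \<in> S"
  shows "s0 \<in> S \<Longrightarrow> s1 \<in> S"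
    and "(a,b) \<in> flow_arcs E Q \<Longrightarrow> a \<notin> S \<Longrightarrow> b \<in> S \<Longrightarrow> s0 \<notin> S \<and> s1 \<in> S"
proof -
  note nf = network_facts[OF net]
  have fin: "finite (cut_edges E S)" using nf(2) by (simp add: cut_edges_def)
  have balance: "(\<Sum>e\<in>cut_edges E S. cross_flow Q S e)
                   = (if s0 \<in> S then 1 else 0) - (if s1 \<in> S then 1 else 0)"
    using unit_flow_cut[OF nf(2) finite_subset[OF \<open>S \<subseteq> V\<close> nf(1)] \<open>S \<subseteq> V\<close> nf(7) uf] .
  have nonpos: "cross_flow Q S e \<le> 0" if "e \<in> cut_edges E S" for e
    using that closed arc_leaving_iff[of E S Q] by force
  show "s0 \<in> S \<Longrightarrow> s1 \<in> S"
    using sum_nonpos[of "cut_edges E S" "cross_flow Q S"] nonpos balance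
    by (auto split: if_splits)
  assume "(a,b) \<in> flow_arcs E Q" "a \<notin> S" "b \<in> S"
  then obtain e where "e \<in> cut_edges E S" "cross_flow Q S e < 0"
    using arc_entering_iff[of E S Q] by blast
  then have "0 < (\<Sum>e\<in>cut_edges E S. - cross_flow Q S e)"
    using nonpos by (intro sum_pos2[OF fin]) auto
  then show "s0 \<notin> S \<and> s1 \<in> S"
    using balance by (auto simp: sum_negf split: if_splits)
qed

lemma coclosed_set_contains_source:
  assumes net: "network V E L s0 s1" and uf: "is_unit_flow V E s0 s1 Q" and "S \<subseteq> V"
    and coclosed: "\<And>a b. (a,b) \<in> flow_arcs E Q \<Longrightarrow> b \<in> S \<Longrightarrow> a \<in> S"
    and arc: "(a,b) \<in> flow_arcs E Q" "a \<in> S" "b \<notin> S"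
  shows "s0 \<in> S"
proof -
  note nf = network_facts[OF net]
  have arcs_V: "flow_arcs E Q \<subseteq> V \<times> V"
    using flow_arcs_subset[of E Q] nf(3) by blast
  have "s0 \<notin> V - S"
  proof (rule conjunct1[OF closed_set_contains_sink(2)[OF net uf, of "V - S"]])
    show "a' \<in> V - S \<Longrightarrow> b' \<in> V - S" if "(a',b') \<in> flow_arcs E Q" for a' b'
      using that arcs_V coclosed by blast
  qed (use arc arcs_V in auto)
  then show ?thesis using nf(5) by blast
qed

text \<open>For a unit flow with acyclic arcs, every arc (a,b) is reachable from the source and
  reaches the sink: otherwise the vertices reached from b, resp. reaching a, would form
  a set violating the two previous lemmas.\<close>

lemma arc_between_source_and_sink:
  assumes net: "network V E L s0 s1" and uf: "is_unit_flow V E s0 s1 Q"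
    and acyc: "acyclic (flow_arcs E Q)" and arc: "(a,b) \<in> flow_arcs E Q"
  shows "(s0,a) \<in> (flow_arcs E Q)\<^sup>*" and "(b,s1) \<in> (flow_arcs E Q)\<^sup>*"
proof -
  let ?A = "flow_arcs E Q"
  have arcs_V: "?A \<subseteq> V \<times> V"
    using flow_arcs_subset[of E Q] network_facts(3)[OF net] by blast
  have no_back: "(b,a) \<notin> ?A\<^sup>*"
    using arc acyc by (meson acyclic_def rtrancl_into_trancl2)
  have "s0 \<in> {v\<in>V. (v,a) \<in> ?A\<^sup>*}"
    using arc arcs_V no_back
    by (intro coclosed_set_contains_source[OF net uf _ _ arc])
       (auto intro: converse_rtrancl_into_rtrancl)
  then show "(s0,a) \<in> ?A\<^sup>*" by simp
  have "s1 \<in> {v\<in>V. (b,v) \<in> ?A\<^sup>*}"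
    using arc arcs_V no_back
    by (intro conjunct2[OF closed_set_contains_sink(2)[OF net uf _ _ arc]])
       (auto intro: rtrancl_into_rtrancl)
  then show "(b,s1) \<in> ?A\<^sup>*" by simp
qed

lemma source_reaches_sink:
  assumes net: "network V E L s0 s1" and uf: "is_unit_flow V E s0 s1 Q"
  shows "(s0,s1) \<in> (flow_arcs E Q)\<^sup>*"
proof -
  have "flow_arcs E Q \<subseteq> V \<times> V"
    using flow_arcs_subset[of E Q] network_facts(3)[OF net] by blast
  then have "s1 \<in> {v\<in>V. (s0,v) \<in> (flow_arcs E Q)\<^sup>*}"
    using network_facts(5)[OF net]
    by (intro closed_set_contains_sink(1)[OF net uf]) (auto intro: rtrancl_into_rtrancl)
  then show ?thesis by simp
qed

lemma arc_on_st_path: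
  assumes net: "network V E L s0 s1" and uf: "is_unit_flow V E s0 s1 Q"
    and acyc: "acyclic (flow_arcs E Q)" and arc: "(a,b) \<in> flow_arcs E Q"
  shows "\<exists>xs. is_path (flow_arcs E Q) s0 s1 xs \<and> (a,b) \<in> set (zip xs (tl xs))"
proof -
  let ?A = "flow_arcs E Q"
  obtain xs where xs: "is_path ?A s0 a xs"
    using acyclic_rtrancl_path[OF acyc arc_between_source_and_sink(1)[OF net uf acyc arc]] ..
  obtain ys where ys: "is_path ?A b s1 ys"
    using acyclic_rtrancl_path[OF acyc arc_between_source_and_sink(2)[OF net uf acyc arc]] ..
  have "a \<noteq> b" using arc acyc by (auto simp: acyclic_def)
  then have ab: "is_path ?A a b [a,b]" using arc by (simp add: is_path_def)
  have abys: "is_path ?A a s1 ([a,b] @ tl ys)" by (rule path_concat(1)[OF acyc ab ys])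
  have "zip (xs @ tl ([a,b] @ tl ys)) (tl (xs @ tl ([a,b] @ tl ys)))
        = zip xs (tl xs) @ zip ([a,b] @ tl ys) (tl ([a,b] @ tl ys))"
    using xs abys by (intro zip_append_tl) (auto simp: is_path_def)
  then show ?thesis
    using path_concat(1)[OF acyc xs abys] by (intro exI[of _ "xs @ tl ([a,b] @ tl ys)"]) auto
qed

text \<open>Cuts of an acyclic unit flow: every s0-s1 cut carries |Q| at least its net flow 1, and
  the cut around s0 carries exactly 1, because no arc can enter s0 without closing a
  cycle.\<close>

lemma acyclic_flow_min_cut:
  assumes net: "network V E L s0 s1" and uf: "is_unit_flow V E s0 s1 Q"
    and acyc: "acyclic (flow_arcs E Q)" and DQ: "\<forall>e\<in>E. D e = \<bar>Q e\<bar>"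
  shows "Min (cut_cap E D ` st_cuts V s0 s1) = cut_cap E D {s0}" and "cut_cap E D {s0} = 1"
proof -
  note nf = network_facts[OF net]
  have cap: "cut_cap E D S = (\<Sum>e\<in>cut_edges E S. \<bar>cross_flow Q S e\<bar>)" for S
    unfolding cut_cap_def using DQ by (intro sum.cong) (auto simp: cut_edges_def)
  have balance: "S \<in> st_cuts V s0 s1 \<Longrightarrow> (\<Sum>e\<in>cut_edges E S. cross_flow Q S e) = 1" for S
    using unit_flow_cut[OF nf(2) _ _ nf(7) uf, of S] finite_subset[OF _ nf(1), of S]
    by (simp add: st_cuts_def)
  have s0_cut: "{s0} \<in> st_cuts V s0 s1" using nf(5,7) by (simp add: st_cuts_def)
  have lower: "1 \<le> cut_cap E D S" if "S \<in> st_cuts V s0 s1" for S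
    unfolding cap balance[OF that, symmetric] by (intro sum_mono abs_ge_self)
  have "cross_flow Q {s0} e \<ge> 0" if e: "e \<in> cut_edges E {s0}" for e
  proof (rule ccontr)
    assume "\<not> cross_flow Q {s0} e \<ge> 0"
    then obtain a where arc: "(a,s0) \<in> flow_arcs E Q"
      using e arc_entering_iff[of E "{s0}" Q] by force
    then have "(s0,a) \<in> (flow_arcs E Q)\<^sup>*"
      by (rule arc_between_source_and_sink(1)[OF net uf acyc])
    then show False using arc acyc by (meson acyclic_def rtrancl_into_trancl2)
  qed
  then have "cut_cap E D {s0} = (\<Sum>e\<in>cut_edges E {s0}. cross_flow Q {s0} e)"
    unfolding cap by (intro sum.cong refl abs_of_nonneg)
  then show s0_cap: "cut_cap E D {s0} = 1" using balance[OF s0_cut] by simp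
  have "finite (st_cuts V s0 s1)"
    using nf(1) by (simp add: st_cuts_def)
  then show "Min (cut_cap E D ` st_cuts V s0 s1) = cut_cap E D {s0}"
    using s0_cut lower s0_cap by (intro Min_eqI) auto
qed

section \<open>Equilibria as flows with equal path lengths\<close>

lemma potential_iff_unit_flow:
  "is_potential V E L D s0 s1 p \<longleftrightarrow> is_unit_flow V E s0 s1 (elec_flow L D p)"
proof -
  have "(\<Sum>e\<in>{e\<in>E. fst e = v}. (p v - p (snd e)) * D e / L e)
          = (\<Sum>e\<in>{e\<in>E. fst e = v}. elec_flow L D p e)"
       "(\<Sum>e\<in>{e\<in>E. snd e = v}. (p v - p (fst e)) * D e / L e)
          = - (\<Sum>e\<in>{e\<in>E. snd e = v}. elec_flow L D p e)" for v
    by (auto simp: elec_flow_def sum_negf[symmetric] intro!: sum.cong)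
       (simp_all add: minus_divide_left algebra_simps)
  then show ?thesis by (simp add: is_potential_def is_unit_flow_def)
qed

lemma unit_flow_cong:
  assumes "\<And>e. e \<in> E \<Longrightarrow> Q e = Q' e"
  shows "is_unit_flow V E s0 s1 Q \<longleftrightarrow> is_unit_flow V E s0 s1 Q'"
proof -
  have "sum Q {e\<in>E. P e} = sum Q' {e\<in>E. P e}" for P
    using assms by (intro sum.cong) auto
  then show ?thesis by (simp add: is_unit_flow_def)
qed

lemma saturated_edge_drop:
  fixes d l x :: real
  assumes "d \<ge> 0" "l > 0" "d = \<bar>d * x / l\<bar>" "d * x / l > 0"
  shows "x = l"
proof -
  have "d > 0" "x > 0"
    using assms(1,2,4) by (auto simp: zero_less_divide_iff zero_less_mult_iff)
  then show ?thesis using assms(2,3) by (simp add: field_simps)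
qed

lemma equilibrium_arc_drop:
  assumes net: "network V E L s0 s1" and D0: "\<forall>e\<in>E. D e \<ge> 0"
    and DQ: "\<forall>e\<in>E. D e = \<bar>elec_flow L D p e\<bar>"
    and arc: "(a,b) \<in> flow_arcs E (elec_flow L D p)"
  shows "elen E L (a,b) = p a - p b" and "p b < p a"
proof -
  note nf = network_facts[OF net]
  have "elen E L (a,b) = p a - p b \<and> 0 < p a - p b"
    using arc unfolding flow_arcs_iff
  proof (elim disjE conjE)
    assume e: "(a,b) \<in> E" and pos: "elec_flow L D p (a,b) > 0"
    have "p a - p b = L (a,b)"
    proof (rule saturated_edge_drop)
      show "D (a,b) = \<bar>D (a,b) * (p a - p b) / L (a,b)\<bar>"
        using bspec[OF DQ e] unfolding elec_flow_def by simp
      show "D (a,b) * (p a - p b) / L (a,b) > 0"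
        using pos unfolding elec_flow_def by simp
    qed (use D0 e nf(8)[OF e] in auto)
    then show ?thesis using e nf(8)[OF e] by (simp add: elen_def)
  next
    assume e: "(b,a) \<in> E" and neg: "elec_flow L D p (b,a) < 0"
    have flip: "elec_flow L D p (b,a) = - (D (b,a) * (p a - p b) / L (b,a))"
      by (simp add: elec_flow_def minus_divide_left algebra_simps)
    have "p a - p b = L (b,a)"
    proof (rule saturated_edge_drop)
      show "D (b,a) = \<bar>D (b,a) * (p a - p b) / L (b,a)\<bar>"
        using bspec[OF DQ e] unfolding flip by simp
      show "D (b,a) * (p a - p b) / L (b,a) > 0"
        using neg unfolding flip by simp
    qed (use D0 e nf(8)[OF e] in auto)
    then show ?thesis using e nf(4)[OF e] nf(8)[OF e] by (simp add: elen_def)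
  qed
  then show "elen E L (a,b) = p a - p b" and "p b < p a" by auto
qed

lemma equilibrium_flow:
  assumes net: "network V E L s0 s1" and eq: "equilibrium V E L s0 s1 D"
  shows "\<exists>Q. is_unit_flow V E s0 s1 Q \<and> (\<forall>e\<in>E. D e = \<bar>Q e\<bar>)
             \<and> acyclic (flow_arcs E Q)
             \<and> (\<forall>xs ys. is_path (flow_arcs E Q) s0 s1 xs \<and> is_path (flow_arcs E Q) s0 s1 ys
                  \<longrightarrow> path_len E L xs = path_len E L ys)"
proof -
  obtain p where D0: "\<forall>e\<in>E. D e \<ge> 0" and pot: "is_potential V E L D s0 s1 p"
    and DQ: "\<forall>e\<in>E. D e = \<bar>elec_flow L D p e\<bar>"
    using eq unfolding equilibrium_def by blast
  let ?A = "flow_arcs E (elec_flow L D p)"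
  note arc_drop = equilibrium_arc_drop[OF net D0 DQ]
  have "acyclic ?A" by (rule potential_acyclic[of _ p]) (rule arc_drop(2))
  moreover have "path_len E L xs = p s0 - p s1" if "is_path ?A s0 s1 xs" for xs
    using that path_len_telescope[of xs ?A E L p] arc_drop(1) by (auto simp: is_path_def)
  ultimately show ?thesis
    using pot DQ unfolding potential_iff_unit_flow by (intro exI[of _ "elec_flow L D p"]) auto
qed

text \<open>The length of a chosen simple path from v to t; it serves as the potential in the
  converse of part (b).\<close>

definition dist_to :: "('v \<times> 'v) set \<Rightarrow> ('v \<times> 'v) set \<Rightarrow> ('v \<times> 'v \<Rightarrow> real) \<Rightarrow> 'v \<Rightarrow> 'v \<Rightarrow> real"
  where "dist_to A E L t v = path_len E L (SOME xs. is_path A v t xs)"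

text \<open>If all s0-s1 paths have the same length, so do all paths to s1 from any vertex
  reachable from s0 (prefix them with a fixed path from s0).\<close>

lemma equal_lengths_from_reachable:
  assumes acyc: "acyclic A" and reach: "(s0,a) \<in> A\<^sup>*"
    and eqlen: "\<forall>xs ys. is_path A s0 s1 xs \<and> is_path A s0 s1 ys \<longrightarrow> path_len E L xs = path_len E L ys"
    and xs: "is_path A a s1 xs" and ys: "is_path A a s1 ys"
  shows "path_len E L xs = path_len E L ys"
proof -
  obtain zs where zs: "is_path A s0 a zs" using acyclic_rtrancl_path[OF acyc reach] ..
  have "path_len E L (zs @ tl xs) = path_len E L (zs @ tl ys)"
    using eqlen path_concat(1)[OF acyc zs xs] path_concat(1)[OF acyc zs ys] by blast
  then show ?thesis using path_concat(2)[OF acyc zs xs] path_concat(2)[OF acyc zs ys] by simp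
qed

lemma dist_to_sink_arc:
  assumes net: "network V E L s0 s1" and uf: "is_unit_flow V E s0 s1 Q"
    and acyc: "acyclic (flow_arcs E Q)"
    and eqlen: "\<forall>xs ys. is_path (flow_arcs E Q) s0 s1 xs \<and> is_path (flow_arcs E Q) s0 s1 ys
                  \<longrightarrow> path_len E L xs = path_len E L ys"
    and arc: "(a,b) \<in> flow_arcs E Q"
  shows "elen E L (a,b) = dist_to (flow_arcs E Q) E L s1 a - dist_to (flow_arcs E Q) E L s1 b"
proof -
  let ?A = "flow_arcs E Q" and ?d = "dist_to (flow_arcs E Q) E L s1"
  have r0: "(s0,a) \<in> ?A\<^sup>*" and r1: "(b,s1) \<in> ?A\<^sup>*"
    using arc_between_source_and_sink[OF net uf acyc arc] by auto
  have some_path: "is_path ?A v s1 (SOME xs. is_path ?A v s1 xs)" if "(v,s1) \<in> ?A\<^sup>*" for v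
    using someI_ex[OF acyclic_rtrancl_path[OF acyc that]] .
  define ys where "ys = (SOME xs. is_path ?A b s1 xs)"
  have ys: "is_path ?A b s1 ys" unfolding ys_def using some_path[OF r1] .
  have "a \<noteq> b" using arc acyc by (auto simp: acyclic_def)
  then have ab: "is_path ?A a b [a,b]" using arc by (simp add: is_path_def)
  have "?d a = path_len E L ([a,b] @ tl ys)"
    unfolding dist_to_def
    by (rule equal_lengths_from_reachable[OF acyc r0 eqlen])
       (use some_path r1 arc path_concat(1)[OF acyc ab ys]
         in \<open>auto intro: converse_rtrancl_into_rtrancl\<close>)
  also have "\<dots> = elen E L (a,b) + ?d b"
    using ys by (cases ys) (auto simp: dist_to_def ys_def path_len_def is_path_def)
  finally show ?thesis by simp
qed

text \<open>Part (b), backward direction: the distance to the sink is a potential whose electrical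
  flow reproduces Q, so D = |Q| is an equilibrium.\<close>

lemma equal_lengths_equilibrium:
  assumes net: "network V E L s0 s1" and D0: "\<forall>e\<in>E. D e \<ge> 0"
    and uf: "is_unit_flow V E s0 s1 Q" and DQ: "\<forall>e\<in>E. D e = \<bar>Q e\<bar>"
    and acyc: "acyclic (flow_arcs E Q)"
    and eqlen: "\<forall>xs ys. is_path (flow_arcs E Q) s0 s1 xs \<and> is_path (flow_arcs E Q) s0 s1 ys
                  \<longrightarrow> path_len E L xs = path_len E L ys"
  shows "equilibrium V E L s0 s1 D"
proof -
  note nf = network_facts[OF net]
  define p where "p = dist_to (flow_arcs E Q) E L s1"
  note arc_drop = dist_to_sink_arc[OF net uf acyc eqlen, folded p_def]
  have flow: "elec_flow L D p e = Q e" if e: "e \<in> E" for e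
  proof -
    obtain u w where uw: "e = (u,w)" by (cases e)
    have l: "L e > 0" using nf(8) e by blast
    consider "Q e > 0" | "Q e < 0" | "Q e = 0" by linarith
    then show ?thesis
    proof cases
      case 1
      then have "p u - p w = L e"
        using arc_drop[of u w] e uw by (simp add: flow_arcs_iff elen_def)
      then show ?thesis using 1 bspec[OF DQ e] l uw by (simp add: elec_flow_def)
    next
      case 2
      then have "p u - p w = - L e"
        using arc_drop[of w u] e uw nf(4) by (simp add: flow_arcs_iff elen_def)
      then show ?thesis using 2 bspec[OF DQ e] l uw by (simp add: elec_flow_def)
    next
      case 3
      then show ?thesis using bspec[OF DQ e] by (simp add: elec_flow_def)
    qed
  qed
  have "is_potential V E L D s0 s1 p"
    unfolding potential_iff_unit_flow using uf unit_flow_cong[of E "elec_flow L D p" Q] flow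
    by blast
  moreover have "\<forall>e\<in>E. D e = \<bar>elec_flow L D p e\<bar>" using DQ flow by simp
  ultimately show ?thesis using D0 unfolding equilibrium_def by blast
qed

section \<open>Graphs with distinct path lengths\<close>

text \<open>A unit flow supported on the edges of a simple s0-s1 path has absolute value 1 on each
  of them: the prefix cut through a given path edge is crossed by no other supporting
  edge.\<close>

lemma flow_on_simple_path:
  assumes net: "network V E L s0 s1" and uf: "is_unit_flow V E s0 s1 Q"
    and xs: "is_path R s0 s1 xs" "set xs \<subseteq> V"
    and supp: "\<And>e. e \<in> E \<Longrightarrow> Q e \<noteq> 0 \<Longrightarrow> e \<in> path_edges E xs"
    and e: "e \<in> path_edges E xs"
  shows "\<bar>Q e\<bar> = 1"
proof -
  note nf = network_facts[OF net]
  have dxs: "distinct xs" and nexs: "xs \<noteq> []" and ends: "hd xs = s0" "last xs = s1"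
    using xs(1) by (auto simp: is_path_def)
  obtain k where k: "Suc k < length xs" "e = (xs!k, xs!Suc k) \<or> e = (xs!Suc k, xs!k)"
    using path_edge_position[OF e] by blast
  define S where "S = set (take (Suc k) xs)"
  have crossing: "(xs!i \<in> S) \<noteq> (xs!Suc i \<in> S) \<longleftrightarrow> i = k" if "Suc i < length xs" for i
    unfolding S_def using prefix_crossing[OF dxs that] by auto
  have "S \<subseteq> V" using xs(2) by (auto simp: S_def dest: in_set_takeD)
  moreover have "s0 \<in> S" "s1 \<notin> S"
    using distinct_take_mem[OF dxs, of 0 "Suc k"]
      distinct_take_mem[OF dxs, of "length xs - 1" "Suc k"] k(1) nexs ends
    by (auto simp: S_def hd_conv_nth last_conv_nth)
  ultimately have balance: "(\<Sum>e'\<in>cut_edges E S. cross_flow Q S e') = 1"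
    using unit_flow_cut[OF nf(2) _ _ nf(7) uf, of S] by (simp add: S_def)
  have eE: "e \<in> E" using e by (simp add: path_edges_def)
  have e_cut: "e \<in> cut_edges E S" using crossing[OF k(1)] k(2) eE by (auto simp: cut_edges_def)
  have only_e: "cross_flow Q S e' = 0" if e': "e' \<in> cut_edges E S - {e}" for e'
  proof (rule ccontr)
    assume "cross_flow Q S e' \<noteq> 0"
    then have "Q e' \<noteq> 0" by (auto simp: cross_flow_def split: if_splits)
    then have "e' \<in> path_edges E xs" using supp[of e'] e' by (simp add: cut_edges_def)
    then obtain i where i: "Suc i < length xs" "e' = (xs!i, xs!Suc i) \<or> e' = (xs!Suc i, xs!i)"
      using path_edge_position by blast
    then have "i = k" using crossing[OF i(1)] e' by (auto simp: cut_edges_def)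
    then show False using i(2) k(2) e' eE nf(4) by (auto simp: cut_edges_def)
  qed
  have "(\<Sum>e'\<in>cut_edges E S. cross_flow Q S e') = cross_flow Q S e"
    using sum.remove[OF _ e_cut, of "cross_flow Q S"] only_e nf(2) by (simp add: cut_edges_def)
  then show ?thesis using balance abs_cross_flow[of Q S e] by simp
qed

text \<open>Part (b) with distinct path lengths, forward direction: the s0-s1 path of the flow
  arcs is unique, every arc lies on it, and the flow equals 1 along it.\<close>

lemma equilibrium_is_path_indicator:
  assumes net: "network V E L s0 s1"
    and distinct_lengths: "\<forall>xs ys. is_path (E \<union> E\<inverse>) s0 s1 xs \<and> is_path (E \<union> E\<inverse>) s0 s1 ys \<and> xs \<noteq> ys
          \<longrightarrow> path_len E L xs \<noteq> path_len E L ys"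
    and eq: "equilibrium V E L s0 s1 D"
  shows "\<exists>xs. is_path (E \<union> E\<inverse>) s0 s1 xs \<and> (\<forall>e\<in>E. D e = (if e \<in> path_edges E xs then 1 else 0))"
proof -
  note nf = network_facts[OF net]
  obtain Q where uf: "is_unit_flow V E s0 s1 Q" and DQ: "\<forall>e\<in>E. D e = \<bar>Q e\<bar>"
    and acyc: "acyclic (flow_arcs E Q)"
    and eqlen: "\<forall>xs ys. is_path (flow_arcs E Q) s0 s1 xs \<and> is_path (flow_arcs E Q) s0 s1 ys
                  \<longrightarrow> path_len E L xs = path_len E L ys"
    using equilibrium_flow[OF net eq] by blast
  let ?A = "flow_arcs E Q"
  have unique: "xs = ys" if "is_path ?A s0 s1 xs" "is_path ?A s0 s1 ys" for xs ys
  proof (rule ccontr)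
    assume "xs \<noteq> ys"
    then have "path_len E L xs \<noteq> path_len E L ys"
      using distinct_lengths is_path_mono[OF that(1) flow_arcs_subset]
        is_path_mono[OF that(2) flow_arcs_subset] by blast
    then show False using eqlen that by blast
  qed
  obtain xs where xs: "is_path ?A s0 s1 xs"
    using acyclic_rtrancl_path[OF acyc source_reaches_sink[OF net uf]] ..
  have arcs_on_xs: "?A \<subseteq> set (zip xs (tl xs))"
    using arc_on_st_path[OF net uf acyc] unique[OF xs] by fast
  have supp: "e \<in> path_edges E xs" if "e \<in> E" "Q e \<noteq> 0" for e
  proof -
    have "(fst e, snd e) \<in> ?A \<or> (snd e, fst e) \<in> ?A"
      using that by (cases e) (auto simp: flow_arcs_iff neq_iff)
    then show ?thesis using arcs_on_xs that(1) by (auto simp: path_edges_def)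
  qed
  have "?A \<subseteq> V \<times> V" using flow_arcs_subset[of E Q] nf(3) by blast
  then have "set (zip xs (tl xs)) \<subseteq> V \<times> V" using xs unfolding is_path_def by blast
  then have "set xs \<subseteq> V"
    by (rule walk_vertices) (use xs nf(5) in \<open>simp_all add: is_path_def\<close>)
  then have "D e = (if e \<in> path_edges E xs then 1 else 0)" if e: "e \<in> E" for e
  proof (cases "e \<in> path_edges E xs")
    case True
    then show ?thesis
      using flow_on_simple_path[OF net uf xs \<open>set xs \<subseteq> V\<close> supp] bspec[OF DQ e] by simp
  next
    case False
    then show ?thesis using supp[OF e] bspec[OF DQ e] by auto
  qed
  then show ?thesis using is_path_mono[OF xs flow_arcs_subset] by blast
qed

definition path_flow :: "'v list \<Rightarrow> 'v \<times> 'v \<Rightarrow> real" where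
  "path_flow xs e = (if e \<in> set (zip xs (tl xs)) then 1
     else if (snd e, fst e) \<in> set (zip xs (tl xs)) then -1 else 0)"

text \<open>The path flow of a simple s0-s1 path is a unit flow: it is the sum of the unit flows
  of its steps, whose balances telescope.\<close>

lemma path_flow_unit:
  fixes E :: "('v \<times> 'v) set"
  assumes net: "network V E L s0 s1" and xs: "is_path (E \<union> E\<inverse>) s0 s1 xs"
  shows "is_unit_flow V E s0 s1 (path_flow xs)"
  unfolding is_unit_flow_def
proof
  fix v
  note nf = network_facts[OF net]
  let ?Z = "set (zip xs (tl xs))"
  have dxs: "distinct xs" and nexs: "xs \<noteq> []" and ends: "hd xs = s0" "last xs = s1"
    and ZE: "?Z \<subseteq> E \<union> E\<inverse>"
    using xs by (auto simp: is_path_def)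
  define chi where
    "chi z e = (if e = z then 1 else 0) - (if e = (snd z, fst z) then 1 else (0::real))"
    for z e :: "'v \<times> 'v"
  have decomp: "path_flow xs e = (\<Sum>z\<in>?Z. chi z e)" for e
  proof -
    have "(\<Sum>z\<in>?Z. chi z e)
        = (\<Sum>z\<in>?Z. if e = z then 1 else 0) - (\<Sum>z\<in>?Z. if (snd e, fst e) = z then 1 else 0)"
      unfolding chi_def sum_subtractf by (intro arg_cong2[where f=minus] sum.cong) auto
    then show ?thesis
      using simple_path_no_backstep[OF dxs, of "fst e" "snd e"] by (auto simp: path_flow_def)
  qed
  have chi_balance: "(\<Sum>e\<in>{e\<in>E. fst e = v}. chi z e) - (\<Sum>e\<in>{e\<in>E. snd e = v}. chi z e)
      = (if fst z = v then 1 else 0) - (if snd z = v then 1 else 0)" if z: "z \<in> ?Z" for z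
  proof -
    have count: "(\<Sum>e\<in>{e\<in>E. P e}. chi z e)
        = (if z \<in> {e\<in>E. P e} then 1 else 0) - (if (snd z, fst z) \<in> {e\<in>E. P e} then 1 else 0)" for P
      unfolding chi_def sum_subtractf using nf(2) by simp
    have "(z \<in> E) \<noteq> ((snd z, fst z) \<in> E)"
      using z ZE nf(4)[of "fst z" "snd z"] by auto
    then show ?thesis unfolding count by auto
  qed
  have "(\<Sum>e\<in>{e\<in>E. fst e = v}. path_flow xs e) - (\<Sum>e\<in>{e\<in>E. snd e = v}. path_flow xs e)
      = (\<Sum>z\<in>?Z. (\<Sum>e\<in>{e\<in>E. fst e = v}. chi z e) - (\<Sum>e\<in>{e\<in>E. snd e = v}. chi z e))"
    unfolding decomp sum_subtractf by (simp add: sum.swap[of _ _ ?Z])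
  also have "\<dots> = (\<Sum>(a,b)\<in>?Z. (if a = v then 1 else 0) - (if b = v then 1 else 0))"
    by (intro sum.cong) (auto simp: chi_balance)
  also have "\<dots> = (\<Sum>(a,b)\<leftarrow>zip xs (tl xs). (if a = v then 1 else 0) - (if b = v then 1 else 0))"
    by (rule sum_list_distinct_conv_sum_set[symmetric]) (rule distinct_zipI1[OF dxs])
  also have "\<dots> = (if hd xs = v then 1 else 0) - (if last xs = v then 1 else 0)"
    by (rule telescope_sum[OF nexs])
  also have "\<dots> = bvec s0 s1 v" using ends nf(7) by (auto simp: bvec_def)
  finally show "(\<Sum>e\<in>{e\<in>E. fst e = v}. path_flow xs e) - (\<Sum>e\<in>{e\<in>E. snd e = v}. path_flow xs e)
      = bvec s0 s1 v" .
qed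

text \<open>Conversely, the indicator of a simple s0-s1 path is an equilibrium: its flow arcs are
  the path steps, the remaining length to s1 is a potential dropping by exactly the
  length of each step, and part (b) applies.\<close>

lemma path_indicator_equilibrium:
  assumes net: "network V E L s0 s1" and xs: "is_path (E \<union> E\<inverse>) s0 s1 xs"
    and DD: "\<forall>e\<in>E. D e = (if e \<in> path_edges E xs then 1 else 0)"
  shows "equilibrium V E L s0 s1 D"
proof -
  note nf = network_facts[OF net]
  let ?Z = "set (zip xs (tl xs))" and ?Q = "path_flow xs"
  have dxs: "distinct xs" and ZE: "?Z \<subseteq> E \<union> E\<inverse>" using xs by (auto simp: is_path_def)
  have D0: "\<forall>e\<in>E. D e \<ge> 0" using DD by simp
  have DQ: "\<forall>e\<in>E. D e = \<bar>?Q e\<bar>" using DD by (auto simp: path_flow_def path_edges_def)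
  have arcs_Z: "flow_arcs E ?Q \<subseteq> ?Z" by (auto simp: flow_arcs_def path_flow_def split: if_splits)
  define idx where "idx v = (THE i. i < length xs \<and> xs!i = v)" for v
  have idx_nth: "idx (xs!i) = i" if "i < length xs" for i
    unfolding idx_def by (rule the_equality) (use that dxs nth_eq_iff_index_eq in auto)
  define g where "g v = path_len E L (drop (idx v) xs)" for v
  have step_drop: "elen E L (a,b) = g a - g b" and descend: "g b < g a"
    if ab: "(a,b) \<in> ?Z" for a b
  proof -
    obtain i where i: "Suc i < length xs" "xs!i = a" "xs!Suc i = b"
      using ab unfolding in_set_zip_tl by blast
    have "idx a = i" "idx b = Suc i" using idx_nth[of i] idx_nth[of "Suc i"] i by auto
    then show "elen E L (a,b) = g a - g b"
      using path_len_drop[OF i(1), of E L] i by (simp add: g_def)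
    have "(a,b) \<in> E \<or> (b,a) \<in> E" using ab ZE by auto
    then have "elen E L (a,b) > 0" using nf(8) by (auto simp: elen_def)
    then show "g b < g a" using \<open>elen E L (a,b) = g a - g b\<close> by simp
  qed
  have acyc: "acyclic (flow_arcs E ?Q)"
    using potential_acyclic[of ?Z g, OF descend] arcs_Z by (rule acyclic_subset)
  have "path_len E L ys = g s0 - g s1" if "is_path (flow_arcs E ?Q) s0 s1 ys" for ys
    using that path_len_telescope[of ys ?Z E L g] arcs_Z step_drop by (auto simp: is_path_def)
  then show ?thesis
    using equal_lengths_equilibrium[OF net D0 path_flow_unit[OF net xs] DQ acyc] by simp
qed

theorem mainTheorem3:
  fixes V :: "'v set" and E :: "('v \<times> 'v) set" and L :: "'v \<times> 'v \<Rightarrow> real"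
    and s0 s1 :: 'v
  assumes "network V E L s0 s1"
  shows
    "(\<forall>D. equilibrium V E L s0 s1 D \<longrightarrow>
        Min (cut_cap E D ` st_cuts V s0 s1) = cut_cap E D {s0} \<and> cut_cap E D {s0} = 1)
   \<and> (\<forall>D. (\<forall>e\<in>E. D e \<ge> 0) \<longrightarrow>
        (equilibrium V E L s0 s1 D \<longleftrightarrow>
          (\<exists>Q. is_unit_flow V E s0 s1 Q \<and> (\<forall>e\<in>E. D e = \<bar>Q e\<bar>)
             \<and> acyclic (flow_arcs E Q)
             \<and> (\<forall>xs ys. is_path (flow_arcs E Q) s0 s1 xs \<and> is_path (flow_arcs E Q) s0 s1 ys
                  \<longrightarrow> path_len E L xs = path_len E L ys))))
   \<and> ((\<forall>xs ys. is_path (E \<union> E\<inverse>) s0 s1 xs \<and> is_path (E \<union> E\<inverse>) s0 s1 ys \<and> xs \<noteq> ys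
          \<longrightarrow> path_len E L xs \<noteq> path_len E L ys)
       \<longrightarrow> (\<forall>D. equilibrium V E L s0 s1 D \<longleftrightarrow>
              (\<exists>xs. is_path (E \<union> E\<inverse>) s0 s1 xs \<and>
                 (\<forall>e\<in>E. D e = (if e \<in> path_edges E xs then 1 else 0)))))"
proof (intro conjI allI impI)
  fix D assume "equilibrium V E L s0 s1 D"
  then obtain Q where "is_unit_flow V E s0 s1 Q" "\<forall>e\<in>E. D e = \<bar>Q e\<bar>" "acyclic (flow_arcs E Q)"
    using equilibrium_flow[OF assms] by blast
  then show "Min (cut_cap E D ` st_cuts V s0 s1) = cut_cap E D {s0}" "cut_cap E D {s0} = 1"
    using acyclic_flow_min_cut[OF assms] by auto
next
  fix D :: "'v \<times> 'v \<Rightarrow> real" assume "\<forall>e\<in>E. D e \<ge> 0"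
  then show "equilibrium V E L s0 s1 D \<longleftrightarrow>
          (\<exists>Q. is_unit_flow V E s0 s1 Q \<and> (\<forall>e\<in>E. D e = \<bar>Q e\<bar>)
             \<and> acyclic (flow_arcs E Q)
             \<and> (\<forall>xs ys. is_path (flow_arcs E Q) s0 s1 xs \<and> is_path (flow_arcs E Q) s0 s1 ys
                  \<longrightarrow> path_len E L xs = path_len E L ys))"
    using equilibrium_flow[OF assms] equal_lengths_equilibrium[OF assms] by blast
next
  fix D :: "'v \<times> 'v \<Rightarrow> real"
  assume "\<forall>xs ys. is_path (E \<union> E\<inverse>) s0 s1 xs \<and> is_path (E \<union> E\<inverse>) s0 s1 ys \<and> xs \<noteq> ys
          \<longrightarrow> path_len E L xs \<noteq> path_len E L ys"
  then show "equilibrium V E L s0 s1 D \<longleftrightarrow>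
              (\<exists>xs. is_path (E \<union> E\<inverse>) s0 s1 xs \<and>
                 (\<forall>e\<in>E. D e = (if e \<in> path_edges E xs then 1 else 0)))"
    using equilibrium_is_path_indicator[OF assms] path_indicator_equilibrium[OF assms] by blast
qed

end
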